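(* Let $k$ be odd and, for $1\le m\le n$, let $C_m$ be the set of positions with exactly $m$ coordinates in $\{0,k-1\}$ and all other coordinates equal to $(k-1)/2$. Let $2\le t\le n-1$, let $I\subseteq\{1,\dots,n\}$ with $|I|=n-t$, let $c_l\in\{0,k-1\}$ for $l\in I$, and let $L=\{p\in M^n: p_l=c_l\ \forall l\in I\}$ be the corresponding external $t$-dimensional layer. For distinct $i,j\notin I$, let $\rho$ be the rotation of $L$: the permutation of $M^n$ sending each $p\in L$ to $\psi_{i,j}(p)$ and fixing all positions outside $L$. Then $\rho$ fixes every position of $C_m$ for every $m\le n-t$, and $\rho$ restricted to $C_{n-t+1}$ is an odd permutation of $C_{n-t+1}$.
   Context: $k\ge2$, $n\ge3$ integers, $M=\{0,\dots,k-1\}$, positions are elements of $M^n$. For distinct $i,j$, $\psi_{i,j}:M^n\to M^n$ is defined by $(\psi_{i,j}p)_i=k-1-p_j$, $(\psi_{i,j}p)_j=p_i$, $(\psi_{i,j}p)_l=p_l$ for $l\notin\{i,j\}$. *)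

theory Defs
  imports Main "HOL-Combinatorics.Permutations"
begin

definition positions :: "nat \<Rightarrow> nat \<Rightarrow> (nat \<Rightarrow> nat) set" where
  "positions k n = {p. (\<forall>l\<in>{1..n}. p l < k) \<and> (\<forall>l. l \<notin> {1..n} \<longrightarrow> p l = 0)}"

definition psi :: "nat \<Rightarrow> nat \<Rightarrow> nat \<Rightarrow> (nat \<Rightarrow> nat) \<Rightarrow> (nat \<Rightarrow> nat)" where
  "psi k i j p = p(i := k - 1 - p j, j := p i)"

definition Cset :: "nat \<Rightarrow> nat \<Rightarrow> nat \<Rightarrow> (nat \<Rightarrow> nat) set" where
  "Cset k n m = {p \<in> positions k n.
      card {l\<in>{1..n}. p l = 0 \<or> p l = k - 1} = m \<and>
      (\<forall>l\<in>{1..n}. p l \<noteq> 0 \<and> p l \<noteq> k - 1 \<longrightarrow> p l = (k - 1) div 2)}"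

definition layer :: "nat \<Rightarrow> nat \<Rightarrow> nat set \<Rightarrow> (nat \<Rightarrow> nat) \<Rightarrow> (nat \<Rightarrow> nat) set" where
  "layer k n I c = {p \<in> positions k n. \<forall>l\<in>I. p l = c l}"

definition rotation :: "nat \<Rightarrow> nat \<Rightarrow> nat set \<Rightarrow> (nat \<Rightarrow> nat) \<Rightarrow> nat \<Rightarrow> nat
    \<Rightarrow> (nat \<Rightarrow> nat) \<Rightarrow> (nat \<Rightarrow> nat)" where
  "rotation k n I c i j p = (if p \<in> layer k n I c then psi k i j p else p)"

definition restrict_perm :: "('a \<Rightarrow> 'a) \<Rightarrow> 'a set \<Rightarrow> 'a \<Rightarrow> 'a" where
  "restrict_perm f S = (\<lambda>x. if x \<in> S then f x else x)"

end

theory Submission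
  imports Defs "HOL-Combinatorics.Cycles"
begin

text \<open>Every position of the layer \<open>L\<close> has an extreme coordinate (\<open>0\<close> or \<open>k - 1\<close>) at each
  \<open>l \<in> I\<close>. Hence a position of \<open>C\<^sub>m \<inter> L\<close> with \<open>m \<le> |I|\<close> has the centre value \<open>(k - 1) / 2\<close>
  at \<open>i\<close> and \<open>j\<close>, and \<open>\<psi>\<^bsub>i,j\<^esub>\<close> fixes it because \<open>k\<close> is odd. A position of
  \<open>C\<^bsub>|I|+1\<^esub> \<inter> L\<close> has exactly one further extreme coordinate \<open>e\<close>; it is fixed unless
  \<open>e \<in> {i, j}\<close>, and the four positions with \<open>e \<in> {i, j}\<close> form a single 4-cycle of
  \<open>\<psi>\<^bsub>i,j\<^esub>\<close>, an odd permutation.\<close>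

lemma evenperm_cycle_of_list:
  assumes "distinct cs"
  shows "evenperm (cycle_of_list cs) \<longleftrightarrow> even (length cs - 1)"
  using assms
proof (induction cs rule: cycle_of_list.induct)
  case (1 i j cs)
  have "evenperm (cycle_of_list (i # j # cs))
      \<longleftrightarrow> (evenperm (Transposition.transpose i j) \<longleftrightarrow> evenperm (cycle_of_list (j # cs)))"
    by (simp only: cycle_of_list.simps(1) evenperm_comp permutation_swap_id permutation_of_cycle)
  also have "\<dots> \<longleftrightarrow> odd (length cs)"
    using 1 by (simp add: evenperm_swap)
  finally show ?case
    by (simp del: cycle_of_list.simps)
qed (simp_all add: evenperm_id)

definition extremes :: "nat \<Rightarrow> nat \<Rightarrow> (nat \<Rightarrow> nat) \<Rightarrow> nat set" where
  "extremes k n p = {l \<in> {1..n}. p l = 0 \<or> p l = k - 1}"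

lemma mem_Cset_iff:
  "p \<in> Cset k n m \<longleftrightarrow> p \<in> positions k n \<and> card (extremes k n p) = m
     \<and> (\<forall>l \<in> {1..n}. l \<notin> extremes k n p \<longrightarrow> p l = (k - 1) div 2)"
  unfolding Cset_def extremes_def by simp

lemma centre_not_extreme:
  fixes k :: nat
  assumes "odd k" "1 < k"
  shows "(k - 1) div 2 \<noteq> 0" "(k - 1) div 2 \<noteq> k - 1" "(k - 1) div 2 < k"
  using assms by (auto elim!: oddE)

lemma subset_extremes_if_in_layer:
  assumes "I \<subseteq> {1..n}" "\<forall>l\<in>I. c l = 0 \<or> c l = k - 1" "p \<in> layer k n I c"
  shows "I \<subseteq> extremes k n p"
  using assms by (auto simp: layer_def extremes_def)

lemma reflect_centre:
  fixes k :: nat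
  assumes "odd k"
  shows "k - 1 - (k - 1) div 2 = (k - 1) div 2"
  using assms by (auto elim!: oddE)

lemma psi_fixes_centred:
  assumes "odd k" "p i = (k - 1) div 2" "p j = (k - 1) div 2"
  shows "psi k i j p = p"
  using assms reflect_centre[OF \<open>odd k\<close>] by (auto simp: psi_def)

lemma rotation_fixes_Cset_le_card:
  assumes "odd k" "I \<subseteq> {1..n}" "\<forall>l\<in>I. c l = 0 \<or> c l = k - 1"
    and "i \<in> {1..n} - I" "j \<in> {1..n} - I"
    and "m \<le> card I" "p \<in> Cset k n m"
  shows "rotation k n I c i j p = p"
proof (cases "p \<in> layer k n I c")
  case True
  have I_sub: "I \<subseteq> extremes k n p"
    using subset_extremes_if_in_layer[OF assms(2,3) True] .
  moreover have "card (extremes k n p) \<le> card I"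
    using assms(6,7) by (simp add: mem_Cset_iff)
  moreover have "finite (extremes k n p)"
    by (simp add: extremes_def)
  ultimately have "extremes k n p = I"
    by (metis card_seteq)
  with assms(4,5,7) have "p i = (k - 1) div 2" "p j = (k - 1) div 2"
    by (auto simp: mem_Cset_iff)
  with True \<open>odd k\<close> show ?thesis
    by (simp add: rotation_def psi_fixes_centred)
qed (simp add: rotation_def)

definition layer_point :: "nat \<Rightarrow> nat \<Rightarrow> nat set \<Rightarrow> (nat \<Rightarrow> nat) \<Rightarrow> nat \<Rightarrow> nat \<Rightarrow> nat \<Rightarrow> nat" where
  "layer_point k n I c e a =
     (\<lambda>l. if l \<in> I then c l else if l = e then a else if l \<in> {1..n} then (k - 1) div 2 else 0)"

lemma layer_point_in_layer_Cset:
  assumes "odd k" "1 < k" "I \<subseteq> {1..n}" "\<forall>l\<in>I. c l = 0 \<or> c l = k - 1"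
    and "e \<in> {1..n} - I" "a = 0 \<or> a = k - 1"
  shows "layer_point k n I c e a \<in> layer k n I c"
    and "layer_point k n I c e a \<in> Cset k n (card I + 1)"
proof -
  note centre = centre_not_extreme[OF assms(1,2)]
  have pos: "layer_point k n I c e a \<in> positions k n"
    using assms centre by (auto simp: positions_def layer_point_def)
  then show "layer_point k n I c e a \<in> layer k n I c"
    by (simp add: layer_def layer_point_def)
  have "extremes k n (layer_point k n I c e a) = insert e I"
    using assms centre by (auto simp: extremes_def layer_point_def)
  moreover have "finite I"
    using assms(3) finite_subset by blast
  moreover have "\<forall>l \<in> {1..n}. l \<notin> insert e I \<longrightarrow> layer_point k n I c e a l = (k - 1) div 2"
    by (simp add: layer_point_def)
  ultimately show "layer_point k n I c e a \<in> Cset k n (card I + 1)"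
    using pos assms(5) by (simp add: mem_Cset_iff)
qed

lemma layer_point_eq_iff:
  assumes "odd k" "1 < k"
    and "e \<in> {1..n} - I" "a = 0 \<or> a = k - 1"
    and "e' \<in> {1..n} - I" "a' = 0 \<or> a' = k - 1"
  shows "layer_point k n I c e a = layer_point k n I c e' a' \<longleftrightarrow> e = e' \<and> a = a'"
proof
  assume "layer_point k n I c e a = layer_point k n I c e' a'"
  then have "a = layer_point k n I c e' a' e"
    using assms(3) by (metis layer_point_def DiffD2)
  moreover have "layer_point k n I c e' a' e = (if e = e' then a' else (k - 1) div 2)"
    using assms(3) by (simp add: layer_point_def)
  ultimately show "e = e' \<and> a = a'"
    using assms(4) centre_not_extreme[OF assms(1,2)] by (auto split: if_splits)
qed simp

lemma layer_Cset_Suc_card_cases: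
  assumes "I \<subseteq> {1..n}" "\<forall>l\<in>I. c l = 0 \<or> c l = k - 1"
    and "p \<in> layer k n I c" "p \<in> Cset k n (card I + 1)"
  obtains e where "e \<in> {1..n} - I" "p e = 0 \<or> p e = k - 1" "p = layer_point k n I c e (p e)"
proof -
  have I_sub: "I \<subseteq> extremes k n p"
    using subset_extremes_if_in_layer[OF assms(1-3)] .
  moreover have "finite I"
    using assms(1) finite_subset by blast
  moreover have "card (extremes k n p) = card I + 1"
    using assms(4) by (simp add: mem_Cset_iff)
  ultimately have "card (extremes k n p - I) = 1"
    by (simp add: card_Diff_subset)
  then obtain e where e: "extremes k n p - I = {e}"
    by (auto simp: card_Suc_eq)
  with I_sub have ext: "extremes k n p = insert e I"
    by auto
  have "p = layer_point k n I c e (p e)"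
  proof
    fix l
    show "p l = layer_point k n I c e (p e) l"
      using assms(3,4) ext
      by (auto simp: layer_point_def layer_def mem_Cset_iff positions_def)
  qed
  with e ext show thesis
    using that by (auto simp: extremes_def)
qed

lemma psi_layer_point:
  assumes "odd k" "i \<in> {1..n} - I" "j \<in> {1..n} - I" "i \<noteq> j"
  shows "psi k i j (layer_point k n I c i a) = layer_point k n I c j a"
    and "psi k i j (layer_point k n I c j a) = layer_point k n I c i (k - 1 - a)"
    and "e \<notin> {i, j} \<Longrightarrow> psi k i j (layer_point k n I c e a) = layer_point k n I c e a"
proof -
  from assms reflect_centre[OF \<open>odd k\<close>]
  show "psi k i j (layer_point k n I c i a) = layer_point k n I c j a"
    and "psi k i j (layer_point k n I c j a) = layer_point k n I c i (k - 1 - a)"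
    by (auto simp: psi_def layer_point_def fun_eq_iff)
  show "e \<notin> {i, j} \<Longrightarrow> psi k i j (layer_point k n I c e a) = layer_point k n I c e a"
    using assms by (intro psi_fixes_centred) (auto simp: layer_point_def)
qed

lemma restrict_rotation_Cset_Suc_card:
  assumes "odd k" "1 < k" "I \<subseteq> {1..n}" "\<forall>l\<in>I. c l = 0 \<or> c l = k - 1"
    and "i \<in> {1..n} - I" "j \<in> {1..n} - I" "i \<noteq> j"
  shows "restrict_perm (rotation k n I c i j) (Cset k n (card I + 1))
       = cycle_of_list [layer_point k n I c i 0, layer_point k n I c j 0,
                        layer_point k n I c i (k - 1), layer_point k n I c j (k - 1)]"
    (is "?rho = cycle_of_list [?ai, ?aj, ?bi, ?bj]")
proof
  fix p
  let ?cs = "[?ai, ?aj, ?bi, ?bj]"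
  note psi_points = psi_layer_point[OF assms(1,5-7)]
  have "distinct ?cs"
    using assms by (simp add: layer_point_eq_iff)
  then have cycle: "cycle_of_list ?cs ?ai = ?aj" "cycle_of_list ?cs ?aj = ?bi"
    "cycle_of_list ?cs ?bi = ?bj" "cycle_of_list ?cs ?bj = ?ai"
    by auto
  have psi_cs: "psi k i j ?ai = ?aj" "psi k i j ?aj = ?bi" "psi k i j ?bi = ?bj" "psi k i j ?bj = ?ai"
    by (simp_all add: psi_points)
  show "?rho p = cycle_of_list ?cs p"
  proof (cases "p \<in> layer k n I c \<and> p \<in> Cset k n (card I + 1)")
    case True
    then have rho: "?rho p = psi k i j p"
      by (simp add: restrict_perm_def rotation_def)
    from True obtain e where e: "e \<in> {1..n} - I" "p e = 0 \<or> p e = k - 1"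
      and p: "p = layer_point k n I c e (p e)"
      using layer_Cset_Suc_card_cases[OF assms(3,4)] by blast
    show ?thesis
    proof (cases "e \<in> {i, j}")
      case True
      with e p have "p \<in> set ?cs"
        by auto
      with rho psi_cs cycle show ?thesis
        by (auto simp del: cycle_of_list.simps)
    next
      case False
      with e assms have "p \<notin> set ?cs"
        by (subst p) (auto simp: layer_point_eq_iff)
      moreover have "psi k i j p = p"
        using False p psi_points(3) by metis
      ultimately show ?thesis
        using rho by (simp add: id_outside_supp del: cycle_of_list.simps)
    qed
  next
    case False
    with assms layer_point_in_layer_Cset[OF assms(1-4)] have "p \<notin> set ?cs"
      by auto
    with False show ?thesis
      by (auto simp: restrict_perm_def rotation_def id_outside_supp simp del: cycle_of_list.simps)
  qed
qed

theorem mainTheorem11: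
  fixes k n t :: nat and I :: "nat set" and c :: "nat \<Rightarrow> nat" and i j :: nat
  assumes "k \<ge> 2" and "n \<ge> 3" and "odd k"
    and "2 \<le> t" and "t \<le> n - 1"
    and "I \<subseteq> {1..n}" and "card I = n - t"
    and "\<forall>l\<in>I. c l = 0 \<or> c l = k - 1"
    and "i \<in> {1..n} - I" and "j \<in> {1..n} - I" and "i \<noteq> j"
  shows "(\<forall>m. 1 \<le> m \<and> m \<le> n - t \<longrightarrow>
            (\<forall>p\<in>Cset k n m. rotation k n I c i j p = p))
       \<and> restrict_perm (rotation k n I c i j) (Cset k n (n - t + 1)) permutes Cset k n (n - t + 1)
       \<and> \<not> evenperm (restrict_perm (rotation k n I c i j) (Cset k n (n - t + 1)))"
proof -
  have "1 < k"
    using assms(1) by simp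
  let ?cs = "[layer_point k n I c i 0, layer_point k n I c j 0,
              layer_point k n I c i (k - 1), layer_point k n I c j (k - 1)]"
  have rho: "restrict_perm (rotation k n I c i j) (Cset k n (n - t + 1)) = cycle_of_list ?cs"
    using restrict_rotation_Cset_Suc_card[OF assms(3) \<open>1 < k\<close> assms(6,8-11)] assms(7) by simp
  have "set ?cs \<subseteq> Cset k n (n - t + 1)"
    using layer_point_in_layer_Cset(2)[OF assms(3) \<open>1 < k\<close> assms(6,8)] assms(7,9,10) by auto
  then have "cycle_of_list ?cs permutes Cset k n (n - t + 1)"
    using cycle_permutes permutes_subset by blast
  moreover have "\<not> evenperm (cycle_of_list ?cs)"
    using assms(9-11) \<open>1 < k\<close> \<open>odd k\<close>
    by (simp add: evenperm_cycle_of_list layer_point_eq_iff del: cycle_of_list.simps)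
  moreover have "\<forall>m. 1 \<le> m \<and> m \<le> n - t \<longrightarrow> (\<forall>p\<in>Cset k n m. rotation k n I c i j p = p)"
    using rotation_fixes_Cset_le_card[OF assms(3,6,8-10)] assms(7) by auto
  ultimately show ?thesis
    using rho by simp
qed

end
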